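(* Let $\mathcal{M}\subseteq\mathbb{S}^n$. Then $\mathcal{T}(\mathcal{M})$ is rank-one generated if and only if for every nonzero $X\in\mathcal{T}(\mathcal{M})$ we have $\mathrm{range}(X)\cap\mathcal{N}(\mathcal{M})\neq\{0\}$.
   Context: $\mathbb{S}^n$ denotes real symmetric $n\times n$ matrices with $\langle A,B\rangle=\mathrm{tr}(AB)$, $\mathbb{S}^n_+$ the PSD cone. For $\mathcal{M}\subseteq\mathbb{S}^n$, $\mathcal{T}(\mathcal{M})=\{X\in\mathbb{S}^n_+:\langle M,X\rangle=0\ \forall M\in\mathcal{M}\}$ and $\mathcal{N}(\mathcal{M})=\{x\in\mathbb{R}^n:x^\top Mx=0\ \forall M\in\mathcal{M}\}$. A closed convex cone $\mathcal{S}\subseteq\mathbb{S}^n_+$ is rank-one generated (ROG) if $\mathcal{S}=\mathrm{conv}(\mathcal{S}\cap\{xx^\top:x\in\mathbb{R}^n\})$. *)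

theory Defs
  imports "HOL-Analysis.Analysis"
begin

definition sym_mat :: "real^'n^'n \<Rightarrow> bool" where
  "sym_mat A \<longleftrightarrow> transpose A = A"

definition psd :: "real^'n^'n \<Rightarrow> bool" where
  "psd A \<longleftrightarrow> sym_mat A \<and> (\<forall>x. x \<bullet> (A *v x) \<ge> 0)"

definition mat_trace :: "real^'n^'n \<Rightarrow> real" where
  "mat_trace A = (\<Sum>i\<in>UNIV. A $ i $ i)"

definition frob :: "real^'n^'n \<Rightarrow> real^'n^'n \<Rightarrow> real" where
  "frob A B = mat_trace (A ** B)"

definition outer :: "real^'n \<Rightarrow> real^'n^'n" where
  "outer x = (\<chi> i j. x $ i * x $ j)"

definition T_set :: "(real^'n^'n) set \<Rightarrow> (real^'n^'n) set" where
  "T_set M = {X. psd X \<and> (\<forall>A\<in>M. frob A X = 0)}"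

definition N_set :: "(real^'n^'n) set \<Rightarrow> (real^'n) set" where
  "N_set M = {x. \<forall>A\<in>M. x \<bullet> (A *v x) = 0}"

definition ROG :: "(real^'n^'n) set \<Rightarrow> bool" where
  "ROG S \<longleftrightarrow> S = convex hull (S \<inter> {outer x | x. True})"

end

theory Submission
  imports Defs
begin

(* If T(M) is generated by matrices x x^T, write a nonzero X in T(M) as a convex combination
   of them: every x with positive weight is orthogonal to the kernel of X, because all summands
   are PSD, so x lies in range X, and x is in N(M) since <A, x x^T> = x^T A x.
   Conversely, if x = X w lies in range X and in N(M), the deflation X - x x^T / (w^T X w) is
   still PSD by Cauchy-Schwarz, still in T(M), and additionally kills w; induction on the
   codimension of the kernel then writes X as a sum of rank-one elements of T(M). *)

lemma outer_mult_vec: "outer x *v v = (x \<bullet> v) *\<^sub>R x"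
  by (simp add: outer_def matrix_vector_mult_def inner_vec_def vec_eq_iff sum_distrib_left
      mult.commute mult.left_commute)

lemma quadratic_form_outer: "v \<bullet> (outer x *v v) = (x \<bullet> v)\<^sup>2"
  by (simp add: outer_mult_vec power2_eq_square inner_commute)

lemma frob_outer: "frob A (outer x) = x \<bullet> (A *v x)"
  by (simp add: frob_def mat_trace_def outer_def matrix_matrix_mult_def matrix_vector_mult_def
      inner_vec_def sum_distrib_left mult.commute mult.left_commute)

lemma outer_scaleR: "outer (a *\<^sub>R x) = a\<^sup>2 *\<^sub>R outer x"
  by (simp add: outer_def vec_eq_iff power2_eq_square mult.commute mult.left_commute)

lemma outer_zero: "outer 0 = 0"
  by (simp add: outer_def vec_eq_iff)

lemma sym_mat_outer: "sym_mat (outer x)"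
  by (simp add: sym_mat_def outer_def transpose_def vec_eq_iff mult.commute)

lemma psd_outer: "psd (outer x)"
  by (simp add: psd_def sym_mat_outer quadratic_form_outer)

lemma sym_mat_inner_commute:
  assumes "sym_mat X"
  shows "v \<bullet> (X *v w) = w \<bullet> (X *v v)"
proof -
  have "v v* X = X *v v"
    using assms vector_transpose_matrix[of v X] by (simp add: sym_mat_def)
  then show ?thesis
    by (metis dot_lmul_matrix inner_commute)
qed

lemma linear_frob: "linear (frob A)"
  by (rule linearI)
    (simp_all add: frob_def mat_trace_def matrix_add_ldistrib sum.distrib
      matrix_scalar_ac scalar_matrix_assoc[symmetric] sum_distrib_left)

lemma linear_quadratic_form:
  fixes v :: "real^'n"
  shows "linear (\<lambda>X. v \<bullet> (X *v v))"
proof (rule linearI)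
  show "v \<bullet> ((X + Y) *v v) = v \<bullet> (X *v v) + v \<bullet> (Y *v v)" for X Y :: "real^'n^'n"
    by (simp add: matrix_vector_mult_add_rdistrib inner_add_right)
  show "v \<bullet> ((c *\<^sub>R X) *v v) = c *\<^sub>R (v \<bullet> (X *v v))" for c and X :: "real^'n^'n"
    by (simp flip: scaleR_matrix_vector_assoc)
qed

lemma convex_psd: "convex {X. psd X}"
proof (rule convexI)
  fix X Y :: "real^'n^'n" and u v :: real
  assume "X \<in> {X. psd X}" "Y \<in> {X. psd X}" "0 \<le> u" "0 \<le> v"
  moreover have "x \<bullet> ((u *\<^sub>R X + v *\<^sub>R Y) *v x) = u * (x \<bullet> (X *v x)) + v * (x \<bullet> (Y *v x))"
    for x
    using linear_add[OF linear_quadratic_form, of x "u *\<^sub>R X" "v *\<^sub>R Y"]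
      linear_scale[OF linear_quadratic_form, of x] by simp
  ultimately show "u *\<^sub>R X + v *\<^sub>R Y \<in> {X. psd X}"
    by (auto simp: psd_def sym_mat_def transpose_def vec_eq_iff)
qed

lemma quadratic_nonneg_imp_discriminant_le:
  fixes a b c :: real
  assumes nonneg: "\<And>s. 0 \<le> a + 2 * b * s + c * s\<^sup>2"
  shows "b\<^sup>2 \<le> a * c"
proof -
  have a: "0 \<le> a" using nonneg[of 0] by simp
  have c: "0 \<le> c"
  proof (rule ccontr)
    assume "\<not> 0 \<le> c"
    define s where "s = sqrt ((a + 1) / - c)"
    have "s\<^sup>2 = (a + 1) / - c"
      using \<open>\<not> 0 \<le> c\<close> a unfolding s_def by (intro real_sqrt_pow2) (simp add: divide_nonneg_neg)
    then have "c * s\<^sup>2 = - (a + 1)"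
      using \<open>\<not> 0 \<le> c\<close> by simp
    then show False using nonneg[of s] nonneg[of "- s"] by simp
  qed
  show ?thesis
  proof (cases "c = 0")
    case True
    have "b = 0"
    proof (rule ccontr)
      assume "b \<noteq> 0"
      then have "a + 2 * b * (- (a + 1) / (2 * b)) + c * (- (a + 1) / (2 * b))\<^sup>2 = -1"
        using True by (simp add: field_simps)
      then show False using nonneg[of "- (a + 1) / (2 * b)"] by simp
    qed
    then show ?thesis using True by simp
  next
    case False
    with c have "0 < c" by simp
    have "a + 2 * b * (- b / c) + c * (- b / c)\<^sup>2 = a - b\<^sup>2 / c"
      using \<open>0 < c\<close> by (simp add: field_simps power2_eq_square)
    then have "0 \<le> a - b\<^sup>2 / c" using nonneg[of "- b / c"] by simp
    then show ?thesis using \<open>0 < c\<close> by (simp add: field_simps)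
  qed
qed

lemma psd_cauchy_schwarz:
  assumes "psd X"
  shows "(v \<bullet> (X *v w))\<^sup>2 \<le> (v \<bullet> (X *v v)) * (w \<bullet> (X *v w))"
proof (rule quadratic_nonneg_imp_discriminant_le)
  fix s :: real
  have "(v + s *\<^sub>R w) \<bullet> (X *v (v + s *\<^sub>R w))
      = v \<bullet> (X *v v) + 2 * (v \<bullet> (X *v w)) * s + (w \<bullet> (X *v w)) * s\<^sup>2"
    using sym_mat_inner_commute[of X w v] assms
    by (simp add: psd_def matrix_vector_right_distrib matrix_vector_mult_scaleR inner_add_left
        inner_add_right power2_eq_square algebra_simps)
  then show "0 \<le> v \<bullet> (X *v v) + 2 * (v \<bullet> (X *v w)) * s + (w \<bullet> (X *v w)) * s\<^sup>2"
    using assms by (metis psd_def)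
qed

lemma psd_range_quadratic_form_pos:
  assumes "psd X" and "X *v w \<noteq> 0"
  shows "0 < w \<bullet> (X *v w)"
proof -
  let ?x = "X *v w"
  have "(?x \<bullet> ?x)\<^sup>2 \<le> (?x \<bullet> (X *v ?x)) * (w \<bullet> (X *v w))"
    using psd_cauchy_schwarz[OF assms(1), of ?x w] .
  moreover have "0 < (?x \<bullet> ?x)\<^sup>2" using assms(2) by simp
  ultimately have "w \<bullet> (X *v w) \<noteq> 0" by auto
  moreover have "0 \<le> w \<bullet> (X *v w)" using assms(1) by (simp add: psd_def)
  ultimately show ?thesis by simp
qed

lemma psd_diff_outer_range:
  assumes "psd X"
  shows "psd (X - (1 / (w \<bullet> (X *v w))) *\<^sub>R outer (X *v w))"
proof -
  let ?x = "X *v w" and ?c = "w \<bullet> (X *v w)"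
  have "0 \<le> v \<bullet> (X *v v) - (?x \<bullet> v)\<^sup>2 / ?c" for v
  proof -
    have "0 \<le> ?c" using assms by (simp add: psd_def)
    moreover have "(?x \<bullet> v)\<^sup>2 \<le> (v \<bullet> (X *v v)) * ?c"
      using psd_cauchy_schwarz[OF assms, of v w] by (simp add: inner_commute)
    moreover have "0 \<le> v \<bullet> (X *v v)" using assms by (simp add: psd_def)
    ultimately show ?thesis by (cases "?c = 0") (simp_all add: field_simps)
  qed
  moreover have "sym_mat (X - (1 / ?c) *\<^sub>R outer ?x)"
    using assms sym_mat_outer
    by (auto simp: psd_def sym_mat_def transpose_def vec_eq_iff)
  ultimately show ?thesis
    by (simp add: psd_def matrix_vector_mult_diff_rdistrib scaleR_matrix_vector_assoc[symmetric]
        inner_diff_right quadratic_form_outer)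
qed

lemma kernel_psubset_diff_outer_range:
  assumes "psd X" and "X *v w \<noteq> 0"
  shows "{v. X *v v = 0} \<subset> {v. (X - (1 / (w \<bullet> (X *v w))) *\<^sub>R outer (X *v w)) *v v = 0}"
    (is "_ \<subset> {v. ?Y *v v = 0}")
proof
  have "(X *v w) \<bullet> v = 0" if "X *v v = 0" for v
    using sym_mat_inner_commute[of X v w] assms(1) that by (simp add: psd_def inner_commute)
  then show "{v. X *v v = 0} \<subseteq> {v. ?Y *v v = 0}"
    by (auto simp: matrix_vector_mult_diff_rdistrib scaleR_matrix_vector_assoc[symmetric]
        outer_mult_vec)
  have "w \<bullet> (X *v w) \<noteq> 0"
    using psd_range_quadratic_form_pos[OF assms] by simp
  then have "?Y *v w = 0"
    by (simp add: matrix_vector_mult_diff_rdistrib scaleR_matrix_vector_assoc[symmetric]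
        outer_mult_vec inner_commute)
  with assms(2) show "{v. X *v v = 0} \<noteq> {v. ?Y *v v = 0}"
    by auto
qed

lemma sym_mat_range_if_orthogonal_kernel:
  assumes "sym_mat X" and "\<And>v. X *v v = 0 \<Longrightarrow> x \<bullet> v = 0"
  shows "x \<in> range (\<lambda>v. X *v v)"
proof -
  have lin: "linear ((*v) X)" by (rule matrix_vector_mul_linear)
  have "transpose X = X" using assms(1) by (simp add: sym_mat_def)
  then have "adjoint ((*v) X) = (*v) X"
    using adjoint_matrix[of X] by simp
  then have kernel: "(*v) X -` {0} = (range ((*v) X))\<^sup>\<bottom>"
    using ker_orthogonal_comp_adjoint[OF lin] by simp
  have "x \<in> ((*v) X -` {0})\<^sup>\<bottom>"
    using assms(2) by (auto simp: orthogonal_comp_def orthogonal_def inner_commute)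
  then show ?thesis
    unfolding kernel orthogonal_comp_self[OF linear_subspace_image[OF lin subspace_UNIV]]
    by simp
qed

lemma codim_kernel_less:
  fixes X Y :: "real^'n^'m"
  assumes "{v. X *v v = 0} \<subset> {v. Y *v v = 0}"
  shows "CARD('n) - dim {v. Y *v v = 0} < CARD('n) - dim {v. X *v v = 0}"
proof -
  have "subspace {v. Z *v v = 0}" for Z :: "real^'n^'m"
    by (auto simp: subspace_def matrix_vector_right_distrib matrix_vector_mult_scaleR)
  then have "dim {v. X *v v = 0} < dim {v. Y *v v = 0}"
    using assms by (intro dim_psubset) (simp add: span_eq_iff[THEN iffD2])
  moreover have "dim {v. Y *v v = 0} \<le> CARD('n)" by (rule dim_subset_UNIV_cart)
  ultimately show ?thesis by linarith
qed

lemma convex_hull_rank_one_range: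
  assumes "S \<subseteq> {X. psd X}" and X: "X \<in> convex hull (S \<inter> range outer)" and "X \<noteq> 0"
  obtains x where "x \<noteq> 0" "outer x \<in> S" "x \<in> range (\<lambda>v. X *v v)"
proof -
  obtain F u where F: "finite F" "F \<subseteq> S \<inter> range outer"
    and u: "\<forall>t\<in>F. 0 \<le> u t" and X_eq: "(\<Sum>t\<in>F. u t *\<^sub>R t) = X"
    using X by (auto simp: convex_hull_explicit)
  have "\<exists>t\<in>F. u t *\<^sub>R t \<noteq> 0"
  proof (rule ccontr)
    assume "\<not> (\<exists>t\<in>F. u t *\<^sub>R t \<noteq> 0)"
    then have "(\<Sum>t\<in>F. u t *\<^sub>R t) = 0" by (intro sum.neutral) blast
    with X_eq \<open>X \<noteq> 0\<close> show False by simp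
  qed
  then obtain t where "t \<in> F" and t_nonzero: "u t *\<^sub>R t \<noteq> 0" by blast
  then obtain x where t: "t = outer x" using F by blast
  have "x \<noteq> 0" using t_nonzero by (auto simp: t outer_zero)
  have "0 < u t" using t_nonzero u \<open>t \<in> F\<close> by (simp add: less_le)
  have "convex hull (S \<inter> range outer) \<subseteq> {X. psd X}"
    by (rule hull_minimal) (use assms(1) convex_psd in auto)
  then have "psd X" using X by blast
  have "x \<in> range (\<lambda>v. X *v v)"
  proof (rule sym_mat_range_if_orthogonal_kernel)
    show "sym_mat X" using \<open>psd X\<close> by (simp add: psd_def)
    fix v assume "X *v v = 0"
    then have sum_zero: "(\<Sum>s\<in>F. u s * (v \<bullet> (s *v v))) = 0"
      using linear_sum[OF linear_quadratic_form[of v], of "\<lambda>s. u s *\<^sub>R s" F]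
        linear_scale[OF linear_quadratic_form[of v]]
      by (simp add: X_eq)
    have nonneg: "0 \<le> u s * (v \<bullet> (s *v v))" if "s \<in> F" for s
    proof -
      have "psd s" using that F assms(1) by blast
      then show ?thesis using that u by (simp add: psd_def)
    qed
    have "\<forall>s\<in>F. u s * (v \<bullet> (s *v v)) = 0"
      using sum_nonneg_eq_0_iff[OF F(1), of "\<lambda>s. u s * (v \<bullet> (s *v v))"] nonneg sum_zero
      by simp
    then have "u t * (v \<bullet> (t *v v)) = 0" using \<open>t \<in> F\<close> by blast
    then show "x \<bullet> v = 0"
      using \<open>0 < u t\<close> by (simp add: t quadratic_form_outer)
  qed
  with \<open>x \<noteq> 0\<close> \<open>t \<in> F\<close> F t that show ?thesis by blast
qed

lemma outer_in_T_set_iff: "outer x \<in> T_set M \<longleftrightarrow> x \<in> N_set M"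
  by (simp add: T_set_def N_set_def psd_outer frob_outer)

lemma convex_T_set:
  fixes M :: "(real^'n^'n) set"
  shows "convex (T_set M)"
proof (rule convexI)
  fix X Y :: "real^'n^'n" and u v :: real
  assume "X \<in> T_set M" "Y \<in> T_set M" "0 \<le> u" "0 \<le> v" "u + v = 1"
  then show "u *\<^sub>R X + v *\<^sub>R Y \<in> T_set M"
    using convexD[OF convex_psd, of X Y u v]
    by (auto simp: T_set_def linear_add[OF linear_frob] linear_scale[OF linear_frob])
qed

lemma convex_cone_convex_hull_rank_one_T_set:
  "convex_cone (convex hull (T_set M \<inter> range outer))"
proof -
  have "cone (T_set M \<inter> range outer)"
  proof (unfold cone_def, intro ballI allI impI)
    fix Z and c :: real assume "Z \<in> T_set M \<inter> range outer" "0 \<le> c"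
    then obtain x where "Z = outer x" "x \<in> N_set M"
      by (auto simp: outer_in_T_set_iff)
    moreover have "sqrt c *\<^sub>R x \<in> N_set M"
      using \<open>x \<in> N_set M\<close> by (simp add: N_set_def matrix_vector_mult_scaleR)
    moreover have "c *\<^sub>R outer x = outer (sqrt c *\<^sub>R x)"
      using \<open>0 \<le> c\<close> by (simp add: outer_scaleR)
    ultimately show "c *\<^sub>R Z \<in> T_set M \<inter> range outer"
      by (simp add: outer_in_T_set_iff)
  qed
  then have "conic (convex hull (T_set M \<inter> range outer))"
    using cone_convex_hull unfolding conic_def Convex.cone_def by blast
  moreover have "outer 0 \<in> T_set M \<inter> range outer"
    by (simp add: outer_in_T_set_iff N_set_def)
  ultimately show ?thesis
    by (auto simp: convex_cone_def dest: hull_inc)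
qed

lemma T_set_diff_outer_range:
  assumes "X \<in> T_set M" and "X *v w \<in> N_set M"
  shows "X - (1 / (w \<bullet> (X *v w))) *\<^sub>R outer (X *v w) \<in> T_set M"
  using assms psd_diff_outer_range[of X w]
  by (simp add: T_set_def N_set_def frob_outer linear_diff[OF linear_frob]
      linear_scale[OF linear_frob])

lemma T_set_subset_convex_hull_rank_one:
  fixes M :: "(real^'n^'n) set"
  assumes range_meets_N: "\<forall>X\<in>T_set M. X \<noteq> 0 \<longrightarrow> range (\<lambda>v. X *v v) \<inter> N_set M \<noteq> {0}"
  shows "T_set M \<subseteq> convex hull (T_set M \<inter> range outer)"
proof
  fix X assume "X \<in> T_set M"
  then show "X \<in> convex hull (T_set M \<inter> range outer)"
  proof (induction "CARD('n) - dim {v. X *v v = 0}" arbitrary: X rule: less_induct)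
    case less
    note K = convex_cone_convex_hull_rank_one_T_set[of M]
    show ?case
    proof (cases "X = 0")
      case True
      then show ?thesis using convex_cone_contains_0[OF K] by simp
    next
      case False
      then have "range (\<lambda>v. X *v v) \<inter> N_set M \<noteq> {0}"
        using range_meets_N less.prems by blast
      moreover have "0 \<in> range (\<lambda>v. X *v v) \<inter> N_set M"
        by (auto simp: N_set_def intro: range_eqI[of _ _ 0])
      ultimately obtain w where "X *v w \<in> N_set M" "X *v w \<noteq> 0"
        by blast
      define c where "c = w \<bullet> (X *v w)"
      define Y where "Y = X - (1 / c) *\<^sub>R outer (X *v w)"
      have "psd X" using less.prems by (simp add: T_set_def)
      have "Y \<in> T_set M"
        unfolding Y_def c_def by (rule T_set_diff_outer_range) fact+
      moreover have "{v. X *v v = 0} \<subset> {v. Y *v v = 0}"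
        unfolding Y_def c_def by (rule kernel_psubset_diff_outer_range) fact+
      ultimately have "Y \<in> convex hull (T_set M \<inter> range outer)"
        using less.hyps codim_kernel_less by blast
      moreover have "(1 / c) *\<^sub>R outer (X *v w) \<in> convex hull (T_set M \<inter> range outer)"
        using \<open>X *v w \<in> N_set M\<close> \<open>psd X\<close>
        by (intro convex_cone_scaleR[OF K] hull_inc) (auto simp: c_def psd_def outer_in_T_set_iff)
      ultimately show ?thesis
        using convex_cone_add[OF K] by (force simp: Y_def)
    qed
  qed
qed

theorem corollary2p26:
  fixes M :: "(real^'n^'n) set"
  assumes "\<forall>A\<in>M. sym_mat A"
  shows "ROG (T_set M) \<longleftrightarrow>
         (\<forall>X\<in>T_set M. X \<noteq> 0 \<longrightarrow> range (\<lambda>v. X *v v) \<inter> N_set M \<noteq> {0})"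
proof -
  have rank_one: "{outer x | x. True} = range outer" by auto
  have hull_subset: "convex hull (T_set M \<inter> range outer) \<subseteq> T_set M"
    by (rule hull_minimal) (auto simp: convex_T_set)
  show ?thesis
  proof
    assume "ROG (T_set M)"
    then have generated: "T_set M = convex hull (T_set M \<inter> range outer)"
      unfolding ROG_def rank_one .
    show "\<forall>X\<in>T_set M. X \<noteq> 0 \<longrightarrow> range (\<lambda>v. X *v v) \<inter> N_set M \<noteq> {0}"
    proof (intro ballI impI)
      fix X assume "X \<in> T_set M" "X \<noteq> 0"
      then obtain x where "x \<noteq> 0" "outer x \<in> T_set M" "x \<in> range (\<lambda>v. X *v v)"
        using convex_hull_rank_one_range[of "T_set M"] generated by (auto simp: T_set_def)
      then show "range (\<lambda>v. X *v v) \<inter> N_set M \<noteq> {0}"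
        by (auto simp: outer_in_T_set_iff)
    qed
  next
    assume "\<forall>X\<in>T_set M. X \<noteq> 0 \<longrightarrow> range (\<lambda>v. X *v v) \<inter> N_set M \<noteq> {0}"
    then show "ROG (T_set M)"
      using T_set_subset_convex_hull_rank_one hull_subset unfolding ROG_def rank_one by blast
  qed
qed

end
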